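(* For any linear graph-based classifier $h$ and any $n$ users with features in $\mathbb{R}^\ell$ and nonnegative embedding weights, the myopic best-response dynamics described below converge (i.e., reach a round after which no user's features change), and they do so after at most $n$ rounds.
   Context: Embeddings: $\phi(x_i;x_{-i})=\widetilde{w}_{ii}x_i+\sum_{j\neq i}\widetilde{w}_{ji}x_j$ with $\widetilde{w}_{ji}\ge0$. Classifier: $h_{\theta,b}(x_i;x_{-i})=\mathrm{sign}(\theta^\top\phi(x_i;x_{-i})+b)\in\{\pm1\}$, $\mathrm{sign}(0)=+1$. Cost: $c(x,x')=\|x-x'\|_2$. Dynamics: $x_i^{(0)}=x_i$; at each round all users update concurrently by $x_i^{(t+1)}=\arg\max_{x'} h(x';x_{-i}^{(t)})-c(x_i^{(t)},x')-\kappa_i^{(t)}$ with accumulated costs $\kappa_i^{(t)}$; concretely, user $i$ changes her features in a round only if she is currently classified $-1$ and some $x'$ with $h(x';x^{(t)}_{-i})=+1$ has $c(x_i^{(t)},x')\le2$, in which case she moves to the minimum-cost such point (embedding exactly on the boundary $\theta^\top\phi+b=0$); otherwise she stays. *)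

theory Defs
  imports "HOL-Analysis.Analysis"
begin

text \<open>Users are indexed by 0..n-1; features of user i are x i :: real^'l.
  W j i is the embedding weight w~_{ji}.\<close>

definition embed :: "(nat \<Rightarrow> nat \<Rightarrow> real) \<Rightarrow> nat \<Rightarrow> (nat \<Rightarrow> real^'l) \<Rightarrow> nat \<Rightarrow> real^'l" where
  "embed W n x i = W i i *\<^sub>R x i + (\<Sum>j\<in>{..<n} - {i}. W j i *\<^sub>R x j)"

definition classify :: "real^'l \<Rightarrow> real \<Rightarrow> (nat \<Rightarrow> nat \<Rightarrow> real) \<Rightarrow> nat \<Rightarrow> (nat \<Rightarrow> real^'l) \<Rightarrow> nat \<Rightarrow> int" where
  "classify \<theta> b W n x i = (if \<theta> \<bullet> embed W n x i + b \<ge> 0 then 1 else -1)"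

definition pos_set :: "real^'l \<Rightarrow> real \<Rightarrow> (nat \<Rightarrow> nat \<Rightarrow> real) \<Rightarrow> nat \<Rightarrow> (nat \<Rightarrow> real^'l) \<Rightarrow> nat \<Rightarrow> (real^'l) set" where
  "pos_set \<theta> b W n x i = {x'. classify \<theta> b W n (x(i := x')) i = 1}"

definition br_step :: "real^'l \<Rightarrow> real \<Rightarrow> (nat \<Rightarrow> nat \<Rightarrow> real) \<Rightarrow> nat \<Rightarrow> (nat \<Rightarrow> real^'l) \<Rightarrow> (nat \<Rightarrow> real^'l) \<Rightarrow> bool" where
  "br_step \<theta> b W n x y \<longleftrightarrow>
     (\<forall>i<n.
        (if classify \<theta> b W n x i = -1 \<and> (\<exists>x'\<in>pos_set \<theta> b W n x i. dist (x i) x' \<le> 2)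
         then y i \<in> pos_set \<theta> b W n x i \<and>
              (\<forall>z\<in>pos_set \<theta> b W n x i. dist (x i) (y i) \<le> dist (x i) z)
         else y i = x i))"

end

theory Submission
  imports Defs
begin

text \<open>With nonnegative weights the classifier score of every user is monotone in the
  quantities \<open>\<theta> \<bullet> x j\<close>. A user who moves goes from label \<open>-1\<close> to label \<open>+1\<close> against
  the old features of the others, which forces her own \<open>\<theta> \<bullet> x i\<close> to increase strictly;
  hence every \<open>\<theta> \<bullet> x j\<close> is nondecreasing along the dynamics, positive labels are never
  lost, and a user who has moved is positive from then on. Only negative users move, so
  each user moves at most once. A round in which nobody moves is a fixed point, and
  among the rounds \<open>0, \<dots>, n\<close> at least one must be idle by pigeonhole. Neither the
  optimality of the chosen point nor the budget 2 plays any role.\<close>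

lemma inner_embed:
  "\<theta> \<bullet> embed W n x i = W i i * (\<theta> \<bullet> x i) + (\<Sum>j\<in>{..<n} - {i}. W j i * (\<theta> \<bullet> x j))"
  unfolding embed_def by (simp add: inner_add_right inner_sum_right)

lemma inner_embed_fun_upd_self:
  "\<theta> \<bullet> embed W n (x(i := z)) i = W i i * (\<theta> \<bullet> z) + (\<Sum>j\<in>{..<n} - {i}. W j i * (\<theta> \<bullet> x j))"
  unfolding inner_embed by (auto intro!: sum.cong)

lemma embed_cong:
  assumes "\<And>j. j < n \<Longrightarrow> x j = y j" and "i < n"
  shows "embed W n x i = embed W n y i"
  unfolding embed_def using assms by (auto intro!: sum.cong)

lemma inner_embed_mono:
  assumes "i < n" and "\<And>j. j < n \<Longrightarrow> W j i \<ge> 0"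
    and "\<And>j. j < n \<Longrightarrow> \<theta> \<bullet> x j \<le> \<theta> \<bullet> y j"
  shows "\<theta> \<bullet> embed W n x i \<le> \<theta> \<bullet> embed W n y i"
  unfolding inner_embed
proof (rule add_mono)
  show "W i i * (\<theta> \<bullet> x i) \<le> W i i * (\<theta> \<bullet> y i)"
    using assms by (intro mult_left_mono) auto
  show "(\<Sum>j\<in>{..<n} - {i}. W j i * (\<theta> \<bullet> x j)) \<le> (\<Sum>j\<in>{..<n} - {i}. W j i * (\<theta> \<bullet> y j))"
    using assms by (intro sum_mono mult_left_mono) auto
qed

lemma classify_eq_1_iff: "classify \<theta> b W n x i = 1 \<longleftrightarrow> 0 \<le> \<theta> \<bullet> embed W n x i + b"
  unfolding classify_def by simp

lemma classify_eq_neg1_iff: "classify \<theta> b W n x i = -1 \<longleftrightarrow> \<theta> \<bullet> embed W n x i + b < 0"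
  unfolding classify_def by simp

lemma classify_mono:
  assumes "classify \<theta> b W n x i = 1" and "i < n" and "\<And>j. j < n \<Longrightarrow> W j i \<ge> 0"
    and "\<And>j. j < n \<Longrightarrow> \<theta> \<bullet> x j \<le> \<theta> \<bullet> y j"
  shows "classify \<theta> b W n y i = 1"
proof -
  have "\<theta> \<bullet> embed W n x i \<le> \<theta> \<bullet> embed W n y i"
    using assms(2-4) by (rule inner_embed_mono)
  then show ?thesis
    using assms(1) unfolding classify_eq_1_iff by linarith
qed

lemma pos_set_cong:
  assumes "\<And>j. j < n \<Longrightarrow> x j = y j" and "i < n"
  shows "pos_set \<theta> b W n x i = pos_set \<theta> b W n y i"
proof -
  have "embed W n (x(i := z)) i = embed W n (y(i := z)) i" for z
    by (rule embed_cong) (use assms in auto)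
  then show ?thesis unfolding pos_set_def classify_def by simp
qed

lemma not_in_pos_set_self:
  assumes "classify \<theta> b W n x i = -1"
  shows "x i \<notin> pos_set \<theta> b W n x i"
  using assms unfolding pos_set_def by simp

lemma inner_less_if_in_pos_set:
  assumes "classify \<theta> b W n x i = -1" and "z \<in> pos_set \<theta> b W n x i" and "W i i \<ge> 0"
  shows "\<theta> \<bullet> x i < \<theta> \<bullet> z"
proof -
  have "W i i * (\<theta> \<bullet> x i) < W i i * (\<theta> \<bullet> z)"
    using assms(1,2) unfolding pos_set_def classify_eq_1_iff classify_eq_neg1_iff
      inner_embed_fun_upd_self inner_embed by simp
  then show ?thesis
    using assms(3) by (rule mult_left_less_imp_less)
qed

definition wants_move :: "real^'l \<Rightarrow> real \<Rightarrow> (nat \<Rightarrow> nat \<Rightarrow> real) \<Rightarrow> nat \<Rightarrow> (nat \<Rightarrow> real^'l) \<Rightarrow> nat \<Rightarrow> bool" where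
  "wants_move \<theta> b W n x i \<longleftrightarrow>
     classify \<theta> b W n x i = -1 \<and> (\<exists>x'\<in>pos_set \<theta> b W n x i. dist (x i) x' \<le> 2)"

lemma wants_move_cong:
  assumes "\<And>j. j < n \<Longrightarrow> x j = y j" and "i < n"
  shows "wants_move \<theta> b W n x i = wants_move \<theta> b W n y i"
  using assms embed_cong[of n x y i W] pos_set_cong[of n x y i \<theta> b W]
  unfolding wants_move_def classify_def by simp

lemma br_step_wants_move:
  assumes "br_step \<theta> b W n x y" and "i < n" and "wants_move \<theta> b W n x i"
  shows "y i \<in> pos_set \<theta> b W n x i"
  using assms unfolding br_step_def wants_move_def by auto

lemma br_step_idle:
  assumes "br_step \<theta> b W n x y" and "i < n" and "\<not> wants_move \<theta> b W n x i"
  shows "y i = x i"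
  using assms unfolding br_step_def wants_move_def by auto

lemma br_step_moved:
  assumes "br_step \<theta> b W n x y" and "i < n" and "y i \<noteq> x i"
  shows "classify \<theta> b W n x i = -1" and "y i \<in> pos_set \<theta> b W n x i"
  using assms br_step_idle br_step_wants_move unfolding wants_move_def by blast+

lemma br_step_inner_mono:
  assumes "br_step \<theta> b W n x y" and "i < n" and "W i i \<ge> 0"
  shows "\<theta> \<bullet> x i \<le> \<theta> \<bullet> y i"
proof (cases "y i = x i")
  case False
  then show ?thesis
    using assms br_step_moved[OF assms(1,2)] inner_less_if_in_pos_set by (metis less_imp_le)
qed simp

lemma br_step_keeps_pos:
  assumes "br_step \<theta> b W n x y" and "i < n" and "\<And>i j. i < n \<Longrightarrow> j < n \<Longrightarrow> W j i \<ge> 0"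
    and "classify \<theta> b W n x i = 1"
  shows "classify \<theta> b W n y i = 1"
  using assms(4,2) by (rule classify_mono) (use assms br_step_inner_mono[OF assms(1)] in auto)

lemma br_step_moved_imp_pos:
  assumes "br_step \<theta> b W n x y" and "i < n" and "\<And>i j. i < n \<Longrightarrow> j < n \<Longrightarrow> W j i \<ge> 0"
    and "y i \<noteq> x i"
  shows "classify \<theta> b W n y i = 1"
proof -
  have "classify \<theta> b W n (x(i := y i)) i = 1"
    using br_step_moved(2)[OF assms(1,2,4)] unfolding pos_set_def by simp
  then show ?thesis
  proof (rule classify_mono)
    show "\<theta> \<bullet> (x(i := y i)) j \<le> \<theta> \<bullet> y j" if "j < n" for j
      using that assms br_step_inner_mono[OF assms(1)] by (cases "j = i") auto
  qed (use assms in auto)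
qed

lemma br_step_unchanged_imp_idle:
  assumes "br_step \<theta> b W n x y" and "br_step \<theta> b W n y z" and "\<And>i. i < n \<Longrightarrow> y i = x i"
    and "i < n"
  shows "z i = y i"
proof -
  have "\<not> wants_move \<theta> b W n x i"
    using assms(1,3,4) br_step_wants_move not_in_pos_set_self
    unfolding wants_move_def by metis
  then have "\<not> wants_move \<theta> b W n y i"
    using wants_move_cong[of n x y i] assms(3,4) by metis
  then show ?thesis
    by (rule br_step_idle[OF assms(2,4)])
qed

lemma pigeonhole_ex_free_round:
  fixes P :: "nat \<Rightarrow> nat \<Rightarrow> bool"
  assumes "\<And>i s t. i < n \<Longrightarrow> P s i \<Longrightarrow> P t i \<Longrightarrow> s = t"
  shows "\<exists>T\<le>n. \<forall>i<n. \<not> P T i"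
proof (rule ccontr)
  assume "\<not> ?thesis"
  then obtain m where m: "\<And>T. T \<le> n \<Longrightarrow> m T < n \<and> P T (m T)"
    by metis
  have "inj_on m {..n}"
    using assms m by (intro inj_onI) (metis atMost_iff)
  moreover have "m ` {..n} \<subseteq> {..<n}"
    using m by auto
  ultimately have "card {..n} \<le> card {..<n}"
    by (metis card_inj_on_le finite_lessThan)
  then show False by simp
qed

locale br_dynamics =
  fixes \<theta> :: "real^'l" and b :: real and W :: "nat \<Rightarrow> nat \<Rightarrow> real" and n :: nat
    and X :: "nat \<Rightarrow> nat \<Rightarrow> real^'l"
  assumes nonneg: "\<And>i j. i < n \<Longrightarrow> j < n \<Longrightarrow> W j i \<ge> 0"
    and dyn: "\<And>t. br_step \<theta> b W n (X t) (X (Suc t))"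
begin

lemma keeps_pos:
  assumes "classify \<theta> b W n (X t) i = 1" and "i < n" and "t \<le> s"
  shows "classify \<theta> b W n (X s) i = 1"
  using assms(3,1)
  by (induction s rule: dec_induct) (use assms(2) br_step_keeps_pos dyn nonneg in blast)+

lemma idle_after_move:
  assumes "i < n" and "X (Suc s) i \<noteq> X s i" and "s < t"
  shows "X (Suc t) i = X t i"
proof (rule ccontr)
  assume "X (Suc t) i \<noteq> X t i"
  then have "classify \<theta> b W n (X t) i = -1"
    using br_step_moved(1) dyn assms(1) by blast
  moreover have "classify \<theta> b W n (X (Suc s)) i = 1"
    using br_step_moved_imp_pos[OF dyn assms(1)] nonneg assms(2) by blast
  then have "classify \<theta> b W n (X t) i = 1"
    using keeps_pos assms(1,3) by (meson Suc_leI)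
  ultimately show False by simp
qed

lemma moves_at_most_once:
  assumes "i < n" and "X (Suc s) i \<noteq> X s i" and "X (Suc t) i \<noteq> X t i"
  shows "s = t"
  using assms idle_after_move by (metis linorder_neqE_nat)

lemma idle_forever:
  assumes "\<And>i. i < n \<Longrightarrow> X (Suc T) i = X T i" and "T \<le> t" and "i < n"
  shows "X t i = X T i"
proof -
  have "\<forall>i<n. X (Suc t) i = X t i \<and> X t i = X T i"
    using assms(2)
  proof (induction t rule: dec_induct)
    case (step t)
    then show ?case
      using br_step_unchanged_imp_idle[OF dyn dyn] by simp
  qed (use assms(1) in simp)
  then show ?thesis
    using assms(3) by blast
qed

end

theorem corollary1:
  fixes \<theta> :: "real^'l" and b :: real and W :: "nat \<Rightarrow> nat \<Rightarrow> real" and n :: nat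
    and X :: "nat \<Rightarrow> nat \<Rightarrow> real^'l"
  assumes nonneg: "\<And>i j. i < n \<Longrightarrow> j < n \<Longrightarrow> W j i \<ge> 0"
    and dyn: "\<And>t. br_step \<theta> b W n (X t) (X (Suc t))"
  shows "\<exists>T\<le>n. \<forall>t\<ge>T. \<forall>i<n. X t i = X T i"
proof -
  interpret br_dynamics \<theta> b W n X
    using assms by unfold_locales
  obtain T where "T \<le> n" and "\<And>i. i < n \<Longrightarrow> X (Suc T) i = X T i"
    using pigeonhole_ex_free_round[of n "\<lambda>t i. X (Suc t) i \<noteq> X t i"] moves_at_most_once by auto
  then show ?thesis
    using idle_forever by blast
qed

end
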